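(* In single-hop Peg Duotaire, if for every $k\in\mathbb{N}$ there exists a position with nim-value at least $k$, then the set $P\subseteq\{0,1\}^*$ of words $w$ such that the position $w$ is a $\mathcal{P}$-position is not a regular language.
   Context: Peg Duotaire is an impartial two-player game played on the infinite line of sites indexed by $\mathbb{Z}$, each site holding a peg or being a hole, with finitely many pegs. A word $w\in\{0,1\}^*$ denotes the position in which $w$ is written on consecutive sites ($1$ = peg, $0$ = hole) and all other sites are holes. A hop: for a peg at site $i$, a peg at site $i+d$ and a hole at site $i+2d$ ($d=\pm1$), move the peg from $i$ to $i+2d$ and remove the peg at $i+d$. In the single-hop version, each move consists of exactly one hop. Players alternate moves; a player unable to move loses. The nim-value of a position is the least nonnegative integer not among the nim-values of positions reachable in one move; a $\mathcal{P}$-position is one with nim-value $0$. *)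

theory Defs
  imports Main
begin

text \<open>A position is the (finite) set of sites of \<int> holding a peg.\<close>

definition hop :: "int set \<Rightarrow> int set \<Rightarrow> bool" where
  "hop S S' \<longleftrightarrow> (\<exists>i d. (d = 1 \<or> d = -1) \<and> i \<in> S \<and> i + d \<in> S \<and> i + 2*d \<notin> S
      \<and> S' = insert (i + 2*d) (S - {i, i + d}))"

definition mex :: "nat set \<Rightarrow> nat" where
  "mex A = (LEAST n. n \<notin> A)"

lemma hop_card: "finite S \<Longrightarrow> hop S S' \<Longrightarrow> finite S' \<and> card S' < card S"
proof -
  assume f: "finite S" and h: "hop S S'"
  then obtain i d where d: "d = 1 \<or> d = -1" and m: "i \<in> S" "i + d \<in> S" "i + 2*d \<notin> S"
    and S': "S' = insert (i + 2*d) (S - {i, i + d})" unfolding hop_def by blast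
  have ne: "i \<noteq> i + d" using d by auto
  have "card (S - {i, i+d}) = card S - 2" using f m ne by (simp add: card_Diff_subset)
  moreover have "i + 2*d \<notin> S - {i, i+d}" using m by simp
  moreover have "card {i, i+d} \<le> card S" using m f by (intro card_mono) auto
  moreover have "card {i, i+d} = 2" using ne by simp
  ultimately show ?thesis using S' f by simp
qed

function nim :: "int set \<Rightarrow> nat" where
  "nim S = (if finite S then mex (nim ` {S'. hop S S'}) else 0)"
  by auto
termination
  by (relation "measure card") (auto dest: hop_card)

definition pos_of :: "bool list \<Rightarrow> int set" where
  "pos_of w = {int i | i. i < length w \<and> w ! i}"

definition regular :: "bool list set \<Rightarrow> bool" where
  "regular L \<longleftrightarrow> (\<exists>(Q :: nat set) q0 (\<delta> :: nat \<Rightarrow> bool \<Rightarrow> nat) F.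
      finite Q \<and> q0 \<in> Q \<and> (\<forall>q\<in>Q. \<forall>a. \<delta> q a \<in> Q) \<and> F \<subseteq> Q \<and>
      L = {w. foldl \<delta> q0 w \<in> F})"

end

theory Submission
  imports Defs
begin

text \<open>Suppose a DFA with N states recognises the P-positions. Since every nim-value occurs (and,
  by translation invariance, occurs for a word), pick words w_0, ..., w_N with nim-values
  0, ..., N. By pigeonhole, two of them, w_a and w_b, followed by the same long run 0^m of holes,
  lead to the same state. But a long enough run of holes splits a position into the disjunctive
  sum of its two halves, which is a P-position iff the halves have equal nim-values: so
  w_a 0^m w_a is a P-position while w_b 0^m w_a is not.\<close>

declare nim.simps[simp del]

lemma hopI:
  "d = 1 \<or> d = -1 \<Longrightarrow> i \<in> S \<Longrightarrow> i + d \<in> S \<Longrightarrow> i + 2*d \<notin> S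
    \<Longrightarrow> hop S (insert (i + 2*d) (S - {i, i + d}))"
  unfolding hop_def by blast

lemma hopE:
  assumes "hop S S'"
  obtains i d where "d = 1 \<or> d = -1" "i \<in> S" "i + d \<in> S" "i + 2*d \<notin> S"
    "S' = insert (i + 2*d) (S - {i, i + d})"
  using assms unfolding hop_def by blast

lemma finite_hops:
  assumes "finite S" shows "finite {S'. hop S S'}"
proof -
  have "{S'. hop S S'} \<subseteq> (\<lambda>(i, d). insert (i + 2*d) (S - {i, i + d})) ` (S \<times> {1, -1})"
    unfolding hop_def by auto
  moreover have "finite (S \<times> {1::int, -1})" using assms by simp
  ultimately show ?thesis by (rule finite_subset[OF _ finite_imageI])
qed

lemma mex_notin: "finite A \<Longrightarrow> mex A \<notin> A"
  unfolding mex_def by (rule LeastI_ex) (meson ex_new_if_finite infinite_UNIV_nat)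

lemma less_mex_imp_mem: "j < mex A \<Longrightarrow> j \<in> A"
  unfolding mex_def using not_less_Least by blast

lemma nim_eq_mex: "finite S \<Longrightarrow> nim S = mex (nim ` {S'. hop S S'})"
  by (subst nim.simps) simp

lemma nim_hop_neq:
  assumes "finite S" "hop S S'" shows "nim S' \<noteq> nim S"
proof
  assume "nim S' = nim S"
  then have "nim S \<in> nim ` {S'. hop S S'}" using assms(2) by (metis image_eqI mem_Collect_eq)
  then show False
    using mex_notin[OF finite_imageI[OF finite_hops]] assms(1) by (simp add: nim_eq_mex)
qed

lemma less_nim_imp_hop:
  assumes "finite S" "j < nim S" obtains S' where "hop S S'" "nim S' = j"
  using less_mex_imp_mem[of j "nim ` {S'. hop S S'}"] assms nim_eq_mex[of S] by auto

text \<open>A hop moves a peg by at most 2 and removes a peg, so the distance between the components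
  drops by at most 2 while card A + card B drops by 1: far-apart components never interact and
  their union is a disjunctive sum.\<close>

definition far_apart :: "int set \<Rightarrow> int set \<Rightarrow> bool" where
  "far_apart A B \<longleftrightarrow> (\<forall>a\<in>A. \<forall>b\<in>B. 2 * int (card A + card B) < \<bar>a - b\<bar>)"

lemma far_apart_sym: "far_apart A B \<longleftrightarrow> far_apart B A"
  unfolding far_apart_def by (metis abs_minus_commute add.commute)

lemma far_apart_disjoint: "far_apart A B \<Longrightarrow> A \<inter> B = {}"
  unfolding far_apart_def by fastforce

lemma far_apart_gap:
  assumes "far_apart A B" "finite A" "a \<in> A" "b \<in> B" shows "\<bar>a - b\<bar> > 2"
proof -
  have "card A \<ge> 1" using assms(2,3) by (metis One_nat_def Suc_leI card_gt_0_iff empty_iff)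
  then show ?thesis using assms(1,3,4) unfolding far_apart_def by force
qed

lemma hop_union_left:
  assumes "finite A" "far_apart A B" "hop A A'"
  shows "hop (A \<union> B) (A' \<union> B)" "far_apart A' B"
proof -
  obtain i d where d: "d = 1 \<or> d = -1" and m: "i \<in> A" "i + d \<in> A" "i + 2*d \<notin> A"
    and A': "A' = insert (i + 2*d) (A - {i, i + d})" using assms(3) by (rule hopE)
  have "card A' < card A" using hop_card[OF assms(1,3)] by simp
  have "i + 2*d \<notin> B"
    using far_apart_gap[OF assms(2,1) m(2), of "i + 2*d"] d by auto
  then have "hop (A \<union> B) (insert (i + 2*d) ((A \<union> B) - {i, i + d}))"
    using d m by (intro hopI) auto
  moreover have "insert (i + 2*d) ((A \<union> B) - {i, i + d}) = A' \<union> B"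
    unfolding A' using far_apart_disjoint[OF assms(2)] m by auto
  ultimately show "hop (A \<union> B) (A' \<union> B)" by simp
  show "far_apart A' B" unfolding far_apart_def
  proof (intro ballI)
    fix a b assume a: "a \<in> A'" and b: "b \<in> B"
    then consider "a = i + 2*d" | "a \<in> A" using A' by auto
    then show "2 * int (card A' + card B) < \<bar>a - b\<bar>"
    proof cases
      case 1
      have "2 * int (card A + card B) < \<bar>i + d - b\<bar>"
        using assms(2) m(2) b unfolding far_apart_def by blast
      then show ?thesis using 1 d \<open>card A' < card A\<close> by auto
    next
      case 2
      then show ?thesis using assms(2) b \<open>card A' < card A\<close> unfolding far_apart_def by force
    qed
  qed
qed

lemma hop_union_right:
  assumes "finite B" "far_apart A B" "hop B B'"
  shows "hop (A \<union> B) (A \<union> B')" "far_apart A B'"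
  using hop_union_left[of B A B'] assms by (simp_all add: far_apart_sym Un_commute)

lemma hop_union_cases:
  assumes "finite A" "finite B" "far_apart A B" "hop (A \<union> B) S'"
  obtains A' where "hop A A'" "S' = A' \<union> B" | B' where "hop B B'" "S' = A \<union> B'"
proof -
  obtain i d where d: "d = 1 \<or> d = -1"
    and m: "i \<in> A \<union> B" "i + d \<in> A \<union> B" "i + 2*d \<notin> A \<union> B"
    and S': "S' = insert (i + 2*d) ((A \<union> B) - {i, i + d})" using assms(4) by (rule hopE)
  have AB: "\<not> (i \<in> A \<and> i + d \<in> B)" using far_apart_gap[OF assms(3,1), of i "i + d"] d by auto
  have BA: "\<not> (i \<in> B \<and> i + d \<in> A)"
    using far_apart_gap[OF far_apart_sym[THEN iffD1, OF assms(3)] assms(2), of i "i + d"] d by auto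
  have disj: "A \<inter> B = {}" using far_apart_disjoint[OF assms(3)] .
  consider "i \<in> A" "i + d \<in> A" | "i \<in> B" "i + d \<in> B" using m AB BA by blast
  then show ?thesis
  proof cases
    case 1
    then have "hop A (insert (i + 2*d) (A - {i, i + d}))" using d m by (intro hopI) auto
    moreover have "S' = insert (i + 2*d) (A - {i, i + d}) \<union> B" using S' disj 1 by auto
    ultimately show ?thesis by (rule that(1))
  next
    case 2
    then have "hop B (insert (i + 2*d) (B - {i, i + d}))" using d m by (intro hopI) auto
    moreover have "S' = A \<union> insert (i + 2*d) (B - {i, i + d})" using S' disj 2 by auto
    ultimately show ?thesis by (rule that(2))
  qed
qed

lemma nim_union_eq_0_iff:
  assumes "finite A" "finite B" "far_apart A B"
  shows "nim (A \<union> B) = 0 \<longleftrightarrow> nim A = nim B"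
  using assms
proof (induction "card A + card B" arbitrary: A B rule: less_induct)
  case less
  note fin = less.prems(1,2) and far = less.prems(3)
  have IH: "nim (A' \<union> B') = 0 \<longleftrightarrow> nim A' = nim B'"
    if "finite A'" "finite B'" "far_apart A' B'" "card A' + card B' < card A + card B" for A' B'
    using less.hyps that by blast
  have fin_union: "finite (A \<union> B)" using fin by simp
  show ?case
  proof
    assume zero: "nim (A \<union> B) = 0"
    show "nim A = nim B"
    proof (rule linorder_cases[of "nim A" "nim B"])
      assume "nim A < nim B"
      then obtain B' where B': "hop B B'" "nim B' = nim A" using less_nim_imp_hop fin(2) by metis
      then have "nim (A \<union> B') = 0"
        using IH[OF fin(1) _ hop_union_right(2)[OF fin(2) far B'(1)]] hop_card[OF fin(2) B'(1)]
          B'(2) by simp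
      then show ?thesis using nim_hop_neq[OF fin_union hop_union_right(1)[OF fin(2) far B'(1)]] zero
        by simp
    next
      assume "nim B < nim A"
      then obtain A' where A': "hop A A'" "nim A' = nim B" using less_nim_imp_hop fin(1) by metis
      then have "nim (A' \<union> B) = 0"
        using IH[OF _ fin(2) hop_union_left(2)[OF fin(1) far A'(1)]] hop_card[OF fin(1) A'(1)]
          A'(2) by simp
      then show ?thesis using nim_hop_neq[OF fin_union hop_union_left(1)[OF fin(1) far A'(1)]] zero
        by simp
    qed
  next
    assume eq: "nim A = nim B"
    show "nim (A \<union> B) = 0"
    proof (rule ccontr)
      assume "nim (A \<union> B) \<noteq> 0"
      then obtain S' where S': "hop (A \<union> B) S'" "nim S' = 0"
        using less_nim_imp_hop[OF fin_union] by blast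
      from fin far S'(1) show False
      proof (rule hop_union_cases)
        fix A' assume A': "hop A A'" "S' = A' \<union> B"
        then have "nim A' = nim B"
          using IH[OF _ fin(2) hop_union_left(2)[OF fin(1) far A'(1)]] hop_card[OF fin(1) A'(1)]
            S'(2) A'(2) by simp
        then show False using nim_hop_neq[OF fin(1) A'(1)] eq by simp
      next
        fix B' assume B': "hop B B'" "S' = A \<union> B'"
        then have "nim A = nim B'"
          using IH[OF fin(1) _ hop_union_right(2)[OF fin(2) far B'(1)]] hop_card[OF fin(2) B'(1)]
            S'(2) B'(2) by simp
        then show False using nim_hop_neq[OF fin(2) B'(1)] eq by simp
      qed
    qed
  qed
qed

lemma hop_translate: "hop S S' \<Longrightarrow> hop ((+) c ` S) ((+) c ` S')"
proof (elim hopE)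
  fix i d assume d: "d = 1 \<or> d = -1" and m: "i \<in> S" "i + d \<in> S" "i + 2*d \<notin> S"
    and S': "S' = insert (i + 2*d) (S - {i, i + d})"
  have "hop ((+) c ` S) (insert (c + i + 2*d) ((+) c ` S - {c + i, c + i + d}))"
    using d m by (intro hopI) (auto simp: add.assoc)
  moreover have "(+) c ` S' = insert (c + i + 2*d) ((+) c ` S - {c + i, c + i + d})"
    unfolding S' by (auto simp: algebra_simps)
  ultimately show ?thesis by simp
qed

lemma hops_translate: "{T. hop ((+) c ` S) T} = (`) ((+) c) ` {S'. hop S S'}"
proof (intro set_eqI iffI)
  fix T assume "T \<in> {T. hop ((+) c ` S) T}"
  then have "hop S ((+) (-c) ` T)"
    using hop_translate[of "(+) c ` S" T "-c"] by (simp add: image_image)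
  moreover have "T = (+) c ` (+) (-c) ` T" by (simp add: image_image)
  ultimately show "T \<in> (`) ((+) c) ` {S'. hop S S'}" by blast
qed (auto intro: hop_translate)

lemma nim_translate: "finite S \<Longrightarrow> nim ((+) c ` S) = nim S"
proof (induction "card S" arbitrary: S rule: less_induct)
  case less
  have "nim ` {T. hop ((+) c ` S) T} = (\<lambda>S'. nim ((+) c ` S')) ` {S'. hop S S'}"
    unfolding hops_translate by (simp add: image_image)
  also have "\<dots> = nim ` {S'. hop S S'}"
    using less hop_card by (intro image_cong) auto
  finally show ?case using less.prems by (simp add: nim_eq_mex)
qed

lemma mem_pos_of: "x \<in> pos_of w \<longleftrightarrow> 0 \<le> x \<and> x < int (length w) \<and> w ! nat x"
  unfolding pos_of_def by (auto intro!: exI[of _ "nat x"])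

lemma finite_pos_of: "finite (pos_of w)"
  unfolding pos_of_def by simp

lemma card_pos_of_le: "card (pos_of w) \<le> length w"
proof -
  have "card (pos_of w) \<le> card (int ` {..<length w})"
    unfolding pos_of_def by (rule card_mono) auto
  also have "\<dots> = length w" by (simp add: card_image)
  finally show ?thesis .
qed

lemma pos_of_replicate_False: "pos_of (replicate n False) = {}"
  unfolding pos_of_def by auto

lemma pos_of_append: "pos_of (u @ v) = pos_of u \<union> (+) (int (length u)) ` pos_of v"
proof (rule set_eqI)
  fix x
  have shifted: "x \<in> (+) (int (length u)) ` pos_of v \<longleftrightarrow> x - int (length u) \<in> pos_of v"
    by (auto intro!: image_eqI[where x = "x - int (length u)"])
  have "x \<in> pos_of (u @ v) \<longleftrightarrow> x \<in> pos_of u \<or> x - int (length u) \<in> pos_of v"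
  proof (cases "x < int (length u)")
    case True
    then show ?thesis by (auto simp: mem_pos_of nth_append)
  next
    case False
    then have "nat x - length u = nat (x - int (length u))" by linarith
    then show ?thesis using False by (auto simp: mem_pos_of nth_append)
  qed
  then show "x \<in> pos_of (u @ v) \<longleftrightarrow> x \<in> pos_of u \<union> (+) (int (length u)) ` pos_of v"
    using shifted by blast
qed

lemma pos_of_indicator_word: "pos_of (map (\<lambda>i. int i \<in> T) [0..<n]) = T \<inter> {0..<int n}"
  by (auto simp: mem_pos_of)

lemma ex_word_nim_eq:
  assumes "finite S" "j \<le> nim S" shows "\<exists>w. nim (pos_of w) = j"
proof -
  obtain T where T: "finite T" "nim T = j"
    using assms less_nim_imp_hop[OF assms(1)] hop_card[OF assms(1)] by (metis le_neq_implies_less)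
  define c where "c = Max (insert 0 (abs ` T))"
  have bound: "\<bar>x\<bar> \<le> c" if "x \<in> T" for x
    unfolding c_def using T(1) that by (intro Max_ge) auto
  have "0 \<le> c" unfolding c_def using T(1) by (intro Max_ge) auto
  then have "c + x \<in> {0..<int (nat (2 * c) + 1)}" if "x \<in> T" for x
    using bound[OF that] by (auto simp: abs_le_iff)
  then have "(+) c ` T \<subseteq> {0..<int (nat (2 * c) + 1)}" by auto
  then have "pos_of (map (\<lambda>i. int i \<in> (+) c ` T) [0..<nat (2 * c) + 1]) = (+) c ` T"
    unfolding pos_of_indicator_word by blast
  then show ?thesis using nim_translate[OF T(1)] T(2) by metis
qed

lemma nim_pos_of_gap_eq_0_iff:
  assumes "2 * (length u + length v) \<le> n"
  shows "nim (pos_of (u @ replicate n False @ v)) = 0 \<longleftrightarrow> nim (pos_of u) = nim (pos_of v)"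
proof -
  define B where "B = (+) (int (length u + n)) ` pos_of v"
  have split: "pos_of (u @ replicate n False @ v) = pos_of u \<union> B"
    unfolding B_def pos_of_append pos_of_replicate_False by (auto simp: image_image add.assoc)
  have "card B = card (pos_of v)" unfolding B_def by (simp add: card_image)
  then have "card (pos_of u) + card B \<le> length u + length v"
    using card_pos_of_le[of u] card_pos_of_le[of v] by simp
  then have "far_apart (pos_of u) B"
    using assms unfolding far_apart_def B_def by (force simp: mem_pos_of)
  moreover have "nim B = nim (pos_of v)" unfolding B_def by (rule nim_translate[OF finite_pos_of])
  ultimately show ?thesis
    unfolding split using nim_union_eq_0_iff[OF finite_pos_of] finite_pos_of B_def by simp
qed

lemma regular_nerode_pigeonhole:
  assumes "regular L"
  shows "\<exists>N :: nat. \<forall>W :: nat \<Rightarrow> bool list.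
    \<exists>a\<le>N. \<exists>b\<le>N. a \<noteq> b \<and> (\<forall>z. W a @ z \<in> L \<longleftrightarrow> W b @ z \<in> L)"
proof -
  obtain Q q0 \<delta> F where Q: "finite Q" "q0 \<in> Q" "\<forall>q\<in>Q. \<forall>a. (\<delta> :: nat \<Rightarrow> bool \<Rightarrow> nat) q a \<in> Q"
    and L: "L = {w. foldl \<delta> q0 w \<in> F}"
    using assms unfolding regular_def by blast
  have reach: "foldl \<delta> q w \<in> Q" if "q \<in> Q" for q w
    using that Q(3) by (induction w arbitrary: q) auto
  have "\<exists>a\<le>card Q. \<exists>b\<le>card Q. a \<noteq> b \<and> (\<forall>z. W a @ z \<in> L \<longleftrightarrow> W b @ z \<in> L)"
    for W :: "nat \<Rightarrow> bool list"
  proof -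
    have "(\<lambda>k. foldl \<delta> q0 (W k)) ` {..card Q} \<subseteq> Q" using reach Q(2) by blast
    then have "\<not> inj_on (\<lambda>k. foldl \<delta> q0 (W k)) {..card Q}"
      using card_inj_on_le[OF _ _ Q(1)] by fastforce
    then obtain a b where ab: "a \<le> card Q" "b \<le> card Q" "a \<noteq> b"
      and "foldl \<delta> q0 (W a) = foldl \<delta> q0 (W b)"
      unfolding inj_on_def by auto
    then have "\<forall>z. W a @ z \<in> L \<longleftrightarrow> W b @ z \<in> L" unfolding L by simp
    then show ?thesis using ab by blast
  qed
  then show ?thesis by blast
qed

theorem lemma3:
  assumes "\<forall>k::nat. \<exists>S::int set. finite S \<and> nim S \<ge> k"
  shows "\<not> regular {w. nim (pos_of w) = 0}"
proof
  let ?P = "{w. nim (pos_of w) = 0}"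
  assume "regular ?P"
  then obtain N :: nat where N: "\<forall>W :: nat \<Rightarrow> bool list.
      \<exists>a\<le>N. \<exists>b\<le>N. a \<noteq> b \<and> (\<forall>z. W a @ z \<in> ?P \<longleftrightarrow> W b @ z \<in> ?P)"
    using regular_nerode_pigeonhole by blast
  have "\<exists>w. nim (pos_of w) = k" for k
    using assms ex_word_nim_eq by blast
  then obtain W where W: "\<And>k. nim (pos_of (W k)) = k" by metis
  define M where "M = Max (length ` W ` {..N})"
  have len: "length (W k) \<le> M" if "k \<le> N" for k
    unfolding M_def using that by (intro Max_ge) auto
  define pad where "pad k = W k @ replicate (4*M) False" for k
  obtain a b where ab: "a \<le> N" "b \<le> N" "a \<noteq> b" and same: "\<forall>z. pad a @ z \<in> ?P \<longleftrightarrow> pad b @ z \<in> ?P"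
    using spec[OF N, of pad] by blast
  have gap: "2 * (length (W k) + length (W a)) \<le> 4*M" if "k \<le> N" for k
    using len[OF that] len[OF ab(1)] by simp
  have "pad a @ W a \<in> ?P"
    using nim_pos_of_gap_eq_0_iff[OF gap[OF ab(1)]] unfolding pad_def by simp
  moreover have "pad b @ W a \<notin> ?P"
    using nim_pos_of_gap_eq_0_iff[OF gap[OF ab(2)]] W ab(3) unfolding pad_def by simp
  ultimately show False using same by blast
qed

end
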